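(* For integers $0\le k\le n$, \[ S_B[n,k]=\sum_{j=k}^n\binom{n}{j}[2]_q^{\,j-k}q^{\,j-k}\,S[j,k]_{q^2} \] and \[ S_B[n,k]=S_D[n,k]+n\cdot[2]_q^{\,n-k-1}q^{\,n-k-1}\,S[n-1,k]_{q^2} \] (when $n=0$ the last summand is $0$ because of the factor $n$).
   Context: $[k]_q=1+\dots+q^{k-1}$, $[0]_q=0$. Carlitz's $q$-Stirling numbers $S[n,k]$: $S[0,k]=\delta_{0k}$, $S[n,k]=S[n-1,k-1]+[k]_qS[n-1,k]$ for $n\ge1$; $S[n,k]_{q^2}$ is $S[n,k]$ with $q$ replaced by $q^2$ (and $S[n,k]=0$ for $k>n$ or $k<0$). $S_B[n,k]$: $S_B[0,k]=\delta_{0k}$, $S_B[n,k]=S_B[n-1,k-1]+[2k+1]_qS_B[n-1,k]$. For $S\subset\mathbb{Z}\setminus\{0\}$, $\overline{S}=\{-i:i\in S\}$, a standard signed partition (SSP) of $S$ with $k$ blocks is a sequence $(S_1,\dots,S_k)$ of disjoint nonempty subsets of $S\cup\overline{S}$ with $\{S_1,\dots,S_k,\overline{S_1},\dots,\overline{S_k}\}$ a partition of $S\cup\overline{S}$ and $\min|S_1|\le\dots\le\min|S_k|$ ($|S_i|=\{|j|:j\in S_i\}$). A PSSP of $S$ is an SSP of a (possibly empty) subset of $S$. $B(S,k)$, $B_{\subseteq}(S,k)$ are the sets of SSPs, PSSPs of $S$ with $k$ blocks, and $D_{\subseteq}([n],k)=B_{\subseteq}([n],k)\setminus\bigcup_{i=1}^nB([n]\setminus\{i\},k)$.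 For $\pi=(S_1,\dots,S_k)$, $\mathrm{pos}(\pi)=\#\{x\in\bigcup_iS_i:x>0\}$, $m(\pi)=2\sum_{i=1}^ki\cdot\#S_i-\mathrm{pos}(\pi)$. The type D $q$-Stirling numbers are $S_D[n,k]=\frac{1}{q^{k^2}[2]_q^k}\sum_{\pi\in D_{\subseteq}([n],k)}q^{m(\pi)}$. *)

theory Defs
  imports Main
begin

definition qint :: "'a::comm_ring_1 \<Rightarrow> nat \<Rightarrow> 'a" where
  "qint q k = (\<Sum>i<k. q ^ i)"

fun qStirling :: "'a::comm_ring_1 \<Rightarrow> nat \<Rightarrow> nat \<Rightarrow> 'a" where
  "qStirling q 0 k = (if k = 0 then 1 else 0)"
| "qStirling q (Suc n) 0 = qint q 0 * qStirling q n 0"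
| "qStirling q (Suc n) (Suc k) = qStirling q n k + qint q (Suc k) * qStirling q n (Suc k)"

fun qStirlingB :: "'a::comm_ring_1 \<Rightarrow> nat \<Rightarrow> nat \<Rightarrow> 'a" where
  "qStirlingB q 0 k = (if k = 0 then 1 else 0)"
| "qStirlingB q (Suc n) 0 = qint q 1 * qStirlingB q n 0"
| "qStirlingB q (Suc n) (Suc k) = qStirlingB q n k + qint q (2 * Suc k + 1) * qStirlingB q n (Suc k)"

definition negset :: "int set \<Rightarrow> int set" where
  "negset A = uminus ` A"

text \<open>A standard signed partition of S with k blocks, represented as the list
  [S_1, ..., S_k].\<close>
definition SSP :: "int set \<Rightarrow> nat \<Rightarrow> int set list \<Rightarrow> bool" where
  "SSP S k \<pi> \<longleftrightarrow>
     length \<pi> = k \<and>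
     (\<forall>i<k. \<pi> ! i \<noteq> {}) \<and>
     (\<forall>i<k. \<forall>j<k. i \<noteq> j \<longrightarrow> \<pi> ! i \<inter> \<pi> ! j = {}) \<and>
     (\<forall>i<k. \<forall>j<k. \<pi> ! i \<inter> negset (\<pi> ! j) = {}) \<and>
     (\<Union>i<k. \<pi> ! i \<union> negset (\<pi> ! i)) = S \<union> negset S \<and>
     (\<forall>i j. i \<le> j \<and> j < k \<longrightarrow> Min (abs ` (\<pi> ! i)) \<le> Min (abs ` (\<pi> ! j)))"

definition Bset :: "int set \<Rightarrow> nat \<Rightarrow> int set list set" where
  "Bset S k = {\<pi>. SSP S k \<pi>}"

definition Bsub :: "int set \<Rightarrow> nat \<Rightarrow> int set list set" where
  "Bsub S k = (\<Union>T\<in>Pow S. Bset T k)"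

definition Dsub :: "nat \<Rightarrow> nat \<Rightarrow> int set list set" where
  "Dsub n k = Bsub {1..int n} k - (\<Union>i\<in>{1..int n}. Bset ({1..int n} - {i}) k)"

definition pos :: "int set list \<Rightarrow> nat" where
  "pos \<pi> = card {x \<in> \<Union>(set \<pi>). x > 0}"

text \<open>m(\<pi>) = 2 * sum_{i=1}^k i * #S_i - pos(\<pi>) (this quantity is never negative).\<close>
definition mstat :: "int set list \<Rightarrow> nat" where
  "mstat \<pi> = 2 * (\<Sum>i<length \<pi>. (i + 1) * card (\<pi> ! i)) - pos \<pi>"

definition qStirlingD :: "'a::field \<Rightarrow> nat \<Rightarrow> nat \<Rightarrow> 'a" where
  "qStirlingD q n k = (\<Sum>\<pi>\<in>Dsub n k. q ^ mstat \<pi>) / (q ^ (k\<^sup>2) * qint q 2 ^ k)"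

end

(*
  Both identities come from deleting the entry of largest absolute value.

  Algebraically, [2k+1]_q = 1 + [2]_q q [k]_(q^2) turns the recurrence of S_B into the binomial
  transform of the recurrence of the scaled Carlitz numbers [2]_q^(j-k) q^(j-k) S[j,k]_(q^2).

  Combinatorially, in an SSP with k blocks of a finite set T of positive integers, the entry
  +-max T either forms the last block on its own or lies in one of the blocks of an SSP of
  T - {max T}; in block number i it raises m by 2i - 1 or 2i.  Hence the m-weighted count of
  these SSPs is q^(k^2) [2]_q^k times the scaled Carlitz number for |T|.  Summing over all subsets
  T of [n] gives q^(k^2) [2]_q^k S_B[n,k] by the first identity, and D_(subseteq)([n],k) omits
  exactly the SSPs of the n sets [n] - {i}, each of which contributes the scaled Carlitz number
  for n - 1.
*)

theory Submission
  imports Defs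
begin

section \<open>The type B numbers as a binomial transform\<close>

lemma qStirling_eq_0: "j < k \<Longrightarrow> qStirling q j k = 0"
proof (induction j arbitrary: k)
  case (Suc j)
  then show ?case by (cases k) auto
qed simp

lemma qint_Suc_0 [simp]: "qint q (Suc 0) = 1"
  by (simp add: qint_def)

lemma qint_2: "qint q 2 = 1 + q"
  by (simp add: qint_def numeral_2_eq_2)

lemma qint_odd: "qint q (2 * k + 1) = 1 + qint q 2 * q * qint (q\<^sup>2) k"
proof (induction k)
  case (Suc k)
  have "qint q (2 * Suc k + 1) = qint q (2 * k + 1) + q ^ (2 * k + 1) + q ^ (2 * k + 2)"
    by (simp add: qint_def)
  also have "\<dots> = 1 + qint q 2 * q * qint (q\<^sup>2) (Suc k)"
    using Suc by (simp add: qint_2) (simp add: qint_def algebra_simps power_mult[symmetric] power_add)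
  finally show ?case .
qed (simp add: qint_def)

lemma sum_odd_even_powers:
  "(\<Sum>i<k. q ^ (2 * i + 1) + q ^ (2 * i + 2)) = q * (1 + q) * qint (q\<^sup>2) k"
  by (induction k) (simp_all add: qint_def algebra_simps power_mult[symmetric] power_add)

definition scaled_qStirling :: "'a::comm_ring_1 \<Rightarrow> nat \<Rightarrow> nat \<Rightarrow> 'a" where
  "scaled_qStirling q j k = (qint q 2 * q) ^ (j - k) * qStirling (q\<^sup>2) j k"

lemma scaled_qStirling_0_left: "scaled_qStirling q 0 k = (if k = 0 then 1 else 0)"
  by (simp add: scaled_qStirling_def)

lemma scaled_qStirling_Suc_0: "scaled_qStirling q (Suc j) 0 = 0"
  by (simp add: scaled_qStirling_def qint_def)

lemma scaled_qStirling_Suc_Suc: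
  "scaled_qStirling q (Suc j) (Suc k) =
     scaled_qStirling q j k + qint q 2 * q * qint (q\<^sup>2) (Suc k) * scaled_qStirling q j (Suc k)"
proof (cases "k < j")
  case True
  then have "j - k = Suc (j - Suc k)" by simp
  then show ?thesis by (simp add: scaled_qStirling_def algebra_simps)
qed (simp add: scaled_qStirling_def qStirling_eq_0)

lemma qStirlingB_0_right [simp]: "qStirlingB q n 0 = 1"
  by (induction n) auto

lemma qStirlingB_eq_binomial_sum:
  "qStirlingB q n k = (\<Sum>j\<le>n. of_nat (n choose j) * scaled_qStirling q j k)"
proof (induction n arbitrary: k)
  case 0
  then show ?case by (simp add: scaled_qStirling_0_left)
next
  case (Suc n)
  define S where "S k = (\<Sum>j\<le>n. of_nat (n choose j) * scaled_qStirling q j k)" for k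
  show ?case
  proof (cases k)
    case 0
    then show ?thesis
      by (simp add: sum.atMost_Suc_shift scaled_qStirling_0_left scaled_qStirling_Suc_0
               del: sum.atMost_Suc)
  next
    case (Suc k')
    define a where "a = qint q 2 * q * qint (q\<^sup>2) (Suc k')"
    have shift: "(\<Sum>j\<le>Suc n. of_nat (m choose j) * scaled_qStirling q j k)
        = (\<Sum>j\<le>n. of_nat (m choose Suc j) * scaled_qStirling q (Suc j) k)" for m
      by (subst sum.atMost_Suc_shift) (simp add: scaled_qStirling_0_left Suc)
    have "(\<Sum>j\<le>Suc n. of_nat (Suc n choose j) * scaled_qStirling q j k)
        = (\<Sum>j\<le>n. of_nat (n choose j) * scaled_qStirling q (Suc j) k)
          + (\<Sum>j\<le>n. of_nat (n choose Suc j) * scaled_qStirling q (Suc j) k)"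
      by (simp only: shift) (simp add: sum.distrib algebra_simps)
    also have "(\<Sum>j\<le>n. of_nat (n choose j) * scaled_qStirling q (Suc j) k) = S k' + a * S k"
      by (simp add: S_def Suc a_def scaled_qStirling_Suc_Suc sum.distrib sum_distrib_left algebra_simps)
    also have "(\<Sum>j\<le>n. of_nat (n choose Suc j) * scaled_qStirling q (Suc j) k) = S k"
    proof -
      have "S k = (\<Sum>j\<le>Suc n. of_nat (n choose j) * scaled_qStirling q j k)"
        by (simp add: S_def binomial_eq_0)
      then show ?thesis by (simp only: shift)
    qed
    also have "S k' + a * S k + S k = qStirlingB q (Suc n) k"
      using qint_odd[of q "Suc k'"] by (simp add: Suc.IH S_def Suc a_def algebra_simps)
    finally show ?thesis by simp
  qed
qed

section \<open>Signed partitions of sets of positive integers\<close>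

lemma negset_iff [simp]: "x \<in> negset A \<longleftrightarrow> - x \<in> A"
  unfolding negset_def by force

lemma abs_image_negset [simp]: "abs ` negset A = abs ` (A :: int set)"
  unfolding negset_def image_image by simp

lemma Un_negset_eq_iff: "A \<union> negset A = B \<union> negset B \<longleftrightarrow> abs ` A = abs ` (B :: int set)"
proof
  assume "A \<union> negset A = B \<union> negset B"
  then have "abs ` (A \<union> negset A) = abs ` (B \<union> negset B)" by simp
  then show "abs ` A = abs ` B" by (simp add: image_Un)
next
  have mem: "x \<in> C \<union> negset C \<longleftrightarrow> \<bar>x\<bar> \<in> abs ` C" for x and C :: "int set"
  proof
    assume "x \<in> C \<union> negset C"
    then show "\<bar>x\<bar> \<in> abs ` C" by (metis UnE abs_minus_cancel image_eqI negset_iff)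
  next
    assume "\<bar>x\<bar> \<in> abs ` C"
    then obtain y where "y \<in> C" "\<bar>x\<bar> = \<bar>y\<bar>" by auto
    moreover from this(2) have "x = y \<or> x = - y" by arith
    ultimately show "x \<in> C \<union> negset C" by auto
  qed
  assume "abs ` A = abs ` B"
  then show "A \<union> negset A = B \<union> negset B" by (intro set_eqI) (simp only: mem)
qed

text \<open>The blocks \<open>-S\<^sub>i\<close> of an SSP are left implicit: for a set of positive integers an SSP
  is determined by \<open>S\<^sub>1, \<dots>, S\<^sub>k\<close>.\<close>
definition abs_SSP :: "int set \<Rightarrow> nat \<Rightarrow> int set list \<Rightarrow> bool" where
  "abs_SSP T k \<pi> \<longleftrightarrow>
     length \<pi> = k \<and> distinct \<pi> \<and> {} \<notin> set \<pi> \<and>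
     (\<forall>B\<in>set \<pi>. \<forall>C\<in>set \<pi>. \<forall>x\<in>B. \<forall>y\<in>C. \<bar>x\<bar> = \<bar>y\<bar> \<longrightarrow> B = C \<and> x = y) \<and>
     abs ` \<Union>(set \<pi>) = T \<and> sorted (map (\<lambda>B. Min (abs ` B)) \<pi>)"

lemma abs_inj_if_SSP_disjoint:
  assumes len: "length \<pi> = k" and ne: "{} \<notin> set \<pi>"
    and D: "(\<forall>i<k. \<forall>j<k. i \<noteq> j \<longrightarrow> \<pi> ! i \<inter> \<pi> ! j = {}) \<and> (\<forall>i<k. \<forall>j<k. \<pi> ! i \<inter> negset (\<pi> ! j) = {})"
  shows "distinct \<pi> \<and> (\<forall>B\<in>set \<pi>. \<forall>C\<in>set \<pi>. \<forall>x\<in>B. \<forall>y\<in>C. \<bar>x\<bar> = \<bar>y\<bar> \<longrightarrow> B = C \<and> x = y)"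
proof
  show "distinct \<pi>"
    unfolding distinct_conv_nth
  proof (intro allI impI)
    fix i j assume ij: "i < length \<pi>" "j < length \<pi>" "i \<noteq> j"
    then have "\<pi> ! i \<inter> \<pi> ! j = {}" using D len by blast
    moreover have "\<pi> ! i \<noteq> {}" using ne ij(1) by (metis nth_mem)
    ultimately show "\<pi> ! i \<noteq> \<pi> ! j" by auto
  qed
  show "\<forall>B\<in>set \<pi>. \<forall>C\<in>set \<pi>. \<forall>x\<in>B. \<forall>y\<in>C. \<bar>x\<bar> = \<bar>y\<bar> \<longrightarrow> B = C \<and> x = y"
  proof (intro ballI impI)
    fix B C x y assume BC: "B \<in> set \<pi>" "C \<in> set \<pi>" and xy: "x \<in> B" "y \<in> C" "\<bar>x\<bar> = \<bar>y\<bar>"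
    obtain i j where ij: "i < k" "j < k" "B = \<pi> ! i" "C = \<pi> ! j"
      using BC len by (auto simp: in_set_conv_nth)
    have no_neg: "\<pi> ! i \<inter> negset (\<pi> ! j) = {}" using D ij(1,2) by blast
    have "x = y \<or> x = - y" using xy(3) by arith
    then show "B = C \<and> x = y"
    proof
      assume "x = - y"
      then have "x \<in> \<pi> ! i \<inter> negset (\<pi> ! j)" using xy ij by simp
      with no_neg show ?thesis by blast
    next
      assume "x = y"
      then show ?thesis using D ij xy(1,2) by blast
    qed
  qed
qed

lemma SSP_disjoint_if_abs_inj:
  assumes len: "length \<pi> = k" and no_0: "0 \<notin> \<Union>(set \<pi>)"
    and A: "distinct \<pi> \<and> (\<forall>B\<in>set \<pi>. \<forall>C\<in>set \<pi>. \<forall>x\<in>B. \<forall>y\<in>C. \<bar>x\<bar> = \<bar>y\<bar> \<longrightarrow> B = C \<and> x = y)"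
  shows "(\<forall>i<k. \<forall>j<k. i \<noteq> j \<longrightarrow> \<pi> ! i \<inter> \<pi> ! j = {}) \<and> (\<forall>i<k. \<forall>j<k. \<pi> ! i \<inter> negset (\<pi> ! j) = {})"
proof -
  from A have abs_inj: "B = C \<and> x = y"
    if "B \<in> set \<pi>" "C \<in> set \<pi>" "x \<in> B" "y \<in> C" "\<bar>x\<bar> = \<bar>y\<bar>" for B C x y
    using that by blast
  have same_block: "i = j" if "i < k" "j < k" "x \<in> \<pi> ! i" "x \<in> \<pi> ! j" for i j x
  proof -
    have "\<pi> ! i = \<pi> ! j" using abs_inj[of "\<pi> ! i" "\<pi> ! j" x x] that len by simp
    then show ?thesis using A that len nth_eq_iff_index_eq by blast
  qed
  have no_opposite: False if "i < k" "j < k" "x \<in> \<pi> ! i" "- x \<in> \<pi> ! j" for i j x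
  proof -
    have "x = 0" using abs_inj[of "\<pi> ! i" "\<pi> ! j" x "- x"] that len by simp
    then show False using no_0 that(1,3) len by (metis UnionI nth_mem)
  qed
  show ?thesis
  proof (intro conjI allI impI)
    fix i j assume "i < k" "j < k" "i \<noteq> j"
    then show "\<pi> ! i \<inter> \<pi> ! j = {}" using same_block by blast
  next
    fix i j assume "i < k" "j < k"
    then show "\<pi> ! i \<inter> negset (\<pi> ! j) = {}" using no_opposite by auto
  qed
qed

lemma SSP_iff_abs_SSP:
  assumes S: "S \<subseteq> {0<..}"
  shows "SSP S k \<pi> \<longleftrightarrow> abs_SSP S k \<pi>"
proof (cases "length \<pi> = k")
  case len: True
  have blocks: "(\<Union>i<k. \<pi> ! i) = \<Union>(set \<pi>)"
    unfolding set_conv_nth using len by auto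
  have "abs ` S = S" using S by force
  moreover have "(\<Union>i<k. \<pi> ! i \<union> negset (\<pi> ! i)) = \<Union>(set \<pi>) \<union> negset (\<Union>(set \<pi>))"
    by (auto simp: blocks[symmetric])
  ultimately have union: "(\<Union>i<k. \<pi> ! i \<union> negset (\<pi> ! i)) = S \<union> negset S \<longleftrightarrow> abs ` \<Union>(set \<pi>) = S"
    by (simp add: Un_negset_eq_iff)
  have nonempty: "(\<forall>i<k. \<pi> ! i \<noteq> {}) \<longleftrightarrow> {} \<notin> set \<pi>"
    using len by (auto simp: in_set_conv_nth)
  have sorted: "(\<forall>i j. i \<le> j \<and> j < k \<longrightarrow> Min (abs ` (\<pi> ! i)) \<le> Min (abs ` (\<pi> ! j)))
      \<longleftrightarrow> sorted (map (\<lambda>B. Min (abs ` B)) \<pi>)"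
    using len by (auto simp: sorted_iff_nth_mono)
  have disjoint: "(\<forall>i<k. \<forall>j<k. i \<noteq> j \<longrightarrow> \<pi> ! i \<inter> \<pi> ! j = {}) \<and> (\<forall>i<k. \<forall>j<k. \<pi> ! i \<inter> negset (\<pi> ! j) = {})
      \<longleftrightarrow> distinct \<pi> \<and> (\<forall>B\<in>set \<pi>. \<forall>C\<in>set \<pi>. \<forall>x\<in>B. \<forall>y\<in>C. \<bar>x\<bar> = \<bar>y\<bar> \<longrightarrow> B = C \<and> x = y)"
    (is "?D \<longleftrightarrow> ?A") if ne: "{} \<notin> set \<pi>" and cover: "abs ` \<Union>(set \<pi>) = S"
  proof (rule iffI)
    show ?A if D: ?D
      by (rule abs_inj_if_SSP_disjoint[OF len ne D])
    have "0 \<notin> \<Union>(set \<pi>)"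
    proof
      assume "0 \<in> \<Union>(set \<pi>)"
      then have "\<bar>0\<bar> \<in> S" using cover by (metis imageI)
      then show False using S by auto
    qed
    then show ?D if A: ?A
      by (rule SSP_disjoint_if_abs_inj[OF len _ A])
  qed
  show ?thesis
  proof
    assume ssp: "SSP S k \<pi>"
    then have "{} \<notin> set \<pi>" "abs ` \<Union>(set \<pi>) = S"
      using nonempty union by (simp_all add: SSP_def)
    with ssp show "abs_SSP S k \<pi>"
      using len sorted disjoint by (simp add: SSP_def abs_SSP_def)
  next
    assume abs: "abs_SSP S k \<pi>"
    then have "{} \<notin> set \<pi>" "abs ` \<Union>(set \<pi>) = S"
      by (simp_all add: abs_SSP_def)
    with abs show "SSP S k \<pi>"
      using len nonempty union sorted disjoint by (simp add: SSP_def abs_SSP_def)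
  qed
qed (simp add: SSP_def abs_SSP_def)

lemma abs_SSP_length: "abs_SSP T k \<pi> \<Longrightarrow> length \<pi> = k"
  by (simp add: abs_SSP_def)

lemma abs_SSP_nonempty: "abs_SSP T k \<pi> \<Longrightarrow> B \<in> set \<pi> \<Longrightarrow> B \<noteq> {}"
  unfolding abs_SSP_def by blast

lemma abs_SSP_abs_mem: "abs_SSP T k \<pi> \<Longrightarrow> B \<in> set \<pi> \<Longrightarrow> x \<in> B \<Longrightarrow> \<bar>x\<bar> \<in> T"
  unfolding abs_SSP_def by blast

lemma abs_SSP_abs_inj:
  "abs_SSP T k \<pi> \<Longrightarrow> B \<in> set \<pi> \<Longrightarrow> C \<in> set \<pi> \<Longrightarrow> x \<in> B \<Longrightarrow> y \<in> C \<Longrightarrow> \<bar>x\<bar> = \<bar>y\<bar>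
    \<Longrightarrow> B = C \<and> x = y"
  unfolding abs_SSP_def by blast

lemma abs_SSP_same_block:
  assumes "abs_SSP T k \<pi>" "i < k" "j < k" "x \<in> \<pi> ! i" "y \<in> \<pi> ! j" "\<bar>x\<bar> = \<bar>y\<bar>"
  shows "i = j \<and> x = y"
proof -
  have "\<pi> ! i = \<pi> ! j \<and> x = y"
    using abs_SSP_abs_inj[OF assms(1) _ _ assms(4-6)] assms(1-3) by (simp add: abs_SSP_def)
  then show ?thesis using assms(1-3) by (simp add: abs_SSP_def nth_eq_iff_index_eq)
qed

lemma abs_SSP_block_subset:
  assumes "abs_SSP T k \<pi>" "B \<in> set \<pi>"
  shows "B \<subseteq> T \<union> uminus ` T"
proof
  fix x assume "x \<in> B"
  then have "\<bar>x\<bar> \<in> T" using abs_SSP_abs_mem[OF assms] by blast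
  then show "x \<in> T \<union> uminus ` T"
    using image_eqI[of x uminus "- x" T] by (cases "0 \<le> x") simp_all
qed

lemma abs_SSP_finite_block:
  assumes "abs_SSP T k \<pi>" "finite T" "B \<in> set \<pi>"
  shows "finite B"
  by (rule finite_subset[OF abs_SSP_block_subset[OF assms(1,3)]]) (use assms(2) in simp)

section \<open>Adding and removing the entry of largest absolute value\<close>

lemma abs_SSP_abs_less: "abs_SSP T k \<pi> \<Longrightarrow> \<forall>t\<in>T. t < c \<Longrightarrow> B \<in> set \<pi> \<Longrightarrow> y \<in> B \<Longrightarrow> \<bar>y\<bar> < c"
  using abs_SSP_abs_mem by blast

lemma abs_SSP_Min_abs_less:
  assumes "abs_SSP T k \<pi>" "finite T" "\<forall>t\<in>T. t < c" "B \<in> set \<pi>"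
  shows "Min (abs ` B) < c"
proof -
  have "Min (abs ` B) \<in> abs ` B"
    using abs_SSP_nonempty[OF assms(1,4)] abs_SSP_finite_block[OF assms(1,2,4)] by simp
  then obtain y where "y \<in> B" "Min (abs ` B) = \<bar>y\<bar>" by blast
  then show ?thesis using abs_SSP_abs_less[OF assms(1,3,4)] by simp
qed

lemma abs_SSP_abs_less_max:
  assumes R: "abs_SSP (insert m T) k R" and less: "\<forall>t\<in>T. t < m"
    and x: "B \<in> set R" "x \<in> B" "\<bar>x\<bar> = m" and y: "C \<in> set R" "y \<in> C" "y \<noteq> x"
  shows "\<bar>y\<bar> < m"
proof -
  have "\<bar>y\<bar> \<noteq> m" using abs_SSP_abs_inj[OF R y(1) x(1) y(2) x(2)] x(3) y(3) by auto
  then show ?thesis using abs_SSP_abs_mem[OF R y(1,2)] less by auto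
qed

lemma Min_abs_insert_greater:
  assumes "finite B" "B \<noteq> {}" "\<forall>y\<in>B. \<bar>y\<bar> < \<bar>x :: int\<bar>"
  shows "Min (abs ` insert x B) = Min (abs ` B)"
proof -
  have "Min (abs ` B) \<in> abs ` B" using assms(1,2) by simp
  then obtain y where "y \<in> B" "Min (abs ` B) = \<bar>y\<bar>" by blast
  then have "Min (abs ` B) \<le> \<bar>x\<bar>" using assms(3) by (metis less_imp_le)
  moreover have "Min (abs ` insert x B) = min \<bar>x\<bar> (Min (abs ` B))"
    using assms(1,2) by (simp add: Min_insert)
  ultimately show ?thesis by (simp add: min_absorb2)
qed

lemma Min_abs_Diff_greater:
  assumes "finite C" "C - {x} \<noteq> {}" "\<forall>y\<in>C - {x}. \<bar>y\<bar> < \<bar>x :: int\<bar>"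
  shows "Min (abs ` (C - {x})) = Min (abs ` C)"
proof (cases "x \<in> C")
  case True
  have "Min (abs ` insert x (C - {x})) = Min (abs ` (C - {x}))"
    using assms by (intro Min_abs_insert_greater) simp_all
  with True show ?thesis by (simp add: insert_absorb)
qed simp

lemma abs_inj_insert_into_block:
  assumes \<pi>: "abs_SSP T k \<pi>" and less: "\<forall>t\<in>T. t < \<bar>x\<bar>" and i: "i < k"
  shows "\<forall>B'\<in>set (\<pi>[i := insert x (\<pi> ! i)]). \<forall>C'\<in>set (\<pi>[i := insert x (\<pi> ! i)]).
           \<forall>a\<in>B'. \<forall>b\<in>C'. \<bar>a\<bar> = \<bar>b\<bar> \<longrightarrow> B' = C' \<and> a = b"
proof (intro ballI impI)
  let ?B = "\<pi> ! i" and ?\<rho> = "\<pi>[i := insert x (\<pi> ! i)]"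
  fix B' C' a b assume B': "B' \<in> set ?\<rho>" and C': "C' \<in> set ?\<rho>"
    and ab: "a \<in> B'" "b \<in> C'" "\<bar>a\<bar> = \<bar>b\<bar>"
  have len: "length \<pi> = k" and dist: "distinct \<pi>" using \<pi> by (simp_all add: abs_SSP_def)
  have B: "?B \<in> set \<pi>" using i len by simp
  have small: "\<bar>y\<bar> < \<bar>x\<bar>" if "C \<in> set \<pi>" "y \<in> C" for C y
    by (rule abs_SSP_abs_less[OF \<pi> less that])
  have set_eq: "set ?\<rho> = insert (insert x ?B) (set \<pi> - {?B})"
    using set_update_distinct[OF dist] i len by simp
  have parent: "\<exists>P\<in>set \<pi>. c \<in> P \<and> D = (if P = ?B then insert x ?B else P)"
    if "D \<in> set ?\<rho>" "c \<in> D" "c \<noteq> x" for D c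
    using that B unfolding set_eq by auto
  show "B' = C' \<and> a = b"
  proof (cases "a = x \<or> b = x")
    case True
    have "a = x \<and> b = x"
    proof (rule ccontr)
      assume "\<not> (a = x \<and> b = x)"
      with True consider "a = x" "b \<noteq> x" | "b = x" "a \<noteq> x" by blast
      then show False
      proof cases
        case 1
        with parent[OF C' ab(2)] small ab(3) show False by fastforce
      next
        case 2
        with parent[OF B' ab(1)] small ab(3) show False by fastforce
      qed
    qed
    moreover have "D = insert x ?B" if "D \<in> set ?\<rho>" "x \<in> D" for D
      using that small[of _ x] unfolding set_eq by auto
    ultimately show ?thesis using B' C' ab(1,2) by auto
  next
    case False
    then obtain P Q where P: "P \<in> set \<pi>" "a \<in> P" "B' = (if P = ?B then insert x ?B else P)"
      and Q: "Q \<in> set \<pi>" "b \<in> Q" "C' = (if Q = ?B then insert x ?B else Q)"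
      using parent[OF B' ab(1)] parent[OF C' ab(2)] by blast
    have "P = Q \<and> a = b" using abs_SSP_abs_inj[OF \<pi> P(1) Q(1) P(2) Q(2) ab(3)] .
    then show ?thesis using P(3) Q(3) by simp
  qed
qed

lemma abs_SSP_insert_into_block:
  assumes \<pi>: "abs_SSP T k \<pi>" and fin: "finite T" and less: "\<forall>t\<in>T. t < \<bar>x\<bar>" and i: "i < k"
  shows "abs_SSP (insert \<bar>x\<bar> T) k (\<pi>[i := insert x (\<pi> ! i)])"
proof -
  let ?B = "\<pi> ! i" and ?\<rho> = "\<pi>[i := insert x (\<pi> ! i)]"
  have len: "length \<pi> = k" and dist: "distinct \<pi>" and ne: "{} \<notin> set \<pi>"
    and cover: "abs ` \<Union>(set \<pi>) = T" and sorted: "sorted (map (\<lambda>B. Min (abs ` B)) \<pi>)"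
    using \<pi> by (simp_all add: abs_SSP_def)
  have B: "?B \<in> set \<pi>" using i len by simp
  have x_new: "x \<notin> C" if "C \<in> set \<pi>" for C
    using abs_SSP_abs_less[OF \<pi> less that, of x] by auto
  have set_eq: "set ?\<rho> = insert (insert x ?B) (set \<pi> - {?B})"
    using set_update_distinct[OF dist] i len by simp
  have "distinct ?\<rho>"
    by (rule distinct_list_update[OF dist]) (use x_new in auto)
  moreover have "{} \<notin> set ?\<rho>" using ne unfolding set_eq by auto
  moreover have "abs ` \<Union>(set ?\<rho>) = insert \<bar>x\<bar> T"
  proof -
    have "\<Union>(set ?\<rho>) = insert x (\<Union>(set \<pi>))" unfolding set_eq using B by auto
    then show ?thesis using cover by simp
  qed
  moreover have "map (\<lambda>B. Min (abs ` B)) ?\<rho> = map (\<lambda>B. Min (abs ` B)) \<pi>"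
  proof -
    have "Min (abs ` insert x ?B) = Min (abs ` ?B)"
      using abs_SSP_finite_block[OF \<pi> fin B] abs_SSP_nonempty[OF \<pi> B] abs_SSP_abs_less[OF \<pi> less B]
      by (intro Min_abs_insert_greater) auto
    then have "map (\<lambda>B. Min (abs ` B)) ?\<rho> = (map (\<lambda>B. Min (abs ` B)) \<pi>)[i := (map (\<lambda>B. Min (abs ` B)) \<pi>) ! i]"
      using i len by (simp add: map_update)
    then show ?thesis by (simp only: list_update_id)
  qed
  ultimately show ?thesis
    using len sorted abs_inj_insert_into_block[OF \<pi> less i] unfolding abs_SSP_def by simp
qed

lemma abs_SSP_append_singleton:
  assumes \<pi>: "abs_SSP T k \<pi>" and fin: "finite T" and less: "\<forall>t\<in>T. t < \<bar>x\<bar>"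
  shows "abs_SSP (insert \<bar>x\<bar> T) (Suc k) (\<pi> @ [{x}])"
proof -
  have small: "\<bar>y\<bar> < \<bar>x\<bar>" if "B \<in> set \<pi>" "y \<in> B" for B y
    by (rule abs_SSP_abs_less[OF \<pi> less that])
  have "\<forall>B\<in>set (\<pi> @ [{x}]). \<forall>C\<in>set (\<pi> @ [{x}]). \<forall>a\<in>B. \<forall>b\<in>C. \<bar>a\<bar> = \<bar>b\<bar> \<longrightarrow> B = C \<and> a = b"
  proof (intro ballI impI)
    fix B C a b assume BC: "B \<in> set (\<pi> @ [{x}])" "C \<in> set (\<pi> @ [{x}])"
      and ab: "a \<in> B" "b \<in> C" "\<bar>a\<bar> = \<bar>b\<bar>"
    have "B \<in> set \<pi> \<or> B = {x}" "C \<in> set \<pi> \<or> C = {x}" using BC by auto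
    then consider "B \<in> set \<pi>" "C \<in> set \<pi>" | "B = {x}" "C = {x}" | "B = {x}" "C \<in> set \<pi>"
      | "B \<in> set \<pi>" "C = {x}"
      by blast
    then show "B = C \<and> a = b"
    proof cases
      case 1
      then show ?thesis using abs_SSP_abs_inj[OF \<pi> _ _ ab] by blast
    next
      case 2
      then show ?thesis using ab(1,2) by simp
    next
      case 3
      then show ?thesis using small[of C b] ab by simp
    next
      case 4
      then show ?thesis using small[of B a] ab by simp
    qed
  qed
  moreover have "{x} \<notin> set \<pi>" using small by force
  then have "distinct (\<pi> @ [{x}])" using \<pi> by (simp add: abs_SSP_def)
  moreover have "{} \<notin> set (\<pi> @ [{x}])" using \<pi> by (simp add: abs_SSP_def)
  moreover have "abs ` \<Union>(set (\<pi> @ [{x}])) = insert \<bar>x\<bar> T" using \<pi> by (auto simp: abs_SSP_def)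
  moreover have "sorted (map (\<lambda>B. Min (abs ` B)) (\<pi> @ [{x}]))"
    using \<pi> less_imp_le[OF abs_SSP_Min_abs_less[OF \<pi> fin less]] by (simp add: abs_SSP_def sorted_append)
  moreover have "length (\<pi> @ [{x}]) = Suc k" using \<pi> by (simp add: abs_SSP_def)
  ultimately show ?thesis unfolding abs_SSP_def by (intro conjI)
qed

lemma abs_SSP_append_singletonD:
  assumes R: "abs_SSP (insert \<bar>x\<bar> T) (Suc k) (\<pi> @ [{x}])" and x: "\<bar>x\<bar> \<notin> T"
  shows "abs_SSP T k \<pi>"
proof -
  have "\<bar>x\<bar> \<notin> abs ` \<Union>(set \<pi>)"
  proof
    assume "\<bar>x\<bar> \<in> abs ` \<Union>(set \<pi>)"
    then obtain B y where "B \<in> set \<pi>" "y \<in> B" "\<bar>y\<bar> = \<bar>x\<bar>" by auto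
    moreover from this have "B = {x}" using abs_SSP_abs_inj[OF R, of B "{x}" y x] by simp
    ultimately show False using R by (simp add: abs_SSP_def)
  qed
  moreover have "insert \<bar>x\<bar> (abs ` \<Union>(set \<pi>)) = insert \<bar>x\<bar> T"
    using R by (simp add: abs_SSP_def)
  ultimately have "abs ` \<Union>(set \<pi>) = T" using x by (simp add: insert_ident)
  then show ?thesis using R by (simp add: abs_SSP_def sorted_append)
qed

lemma abs_SSP_singleton_max_last:
  assumes R: "abs_SSP (insert m T) k R" and fin: "finite T" and less: "\<forall>t\<in>T. t < m"
    and x: "{x} \<in> set R" "\<bar>x\<bar> = m"
  shows "last R = {x}"
proof (rule ccontr)
  assume last: "last R \<noteq> {x}"
  have "R \<noteq> []" using x by auto
  then have L: "last R \<in> set R" by simp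
  have "{x} \<in> set (butlast R)" using x(1) last by (cases R rule: rev_cases) auto
  have "sorted (map (\<lambda>B. Min (abs ` B)) (butlast R @ [last R]))"
    using R \<open>R \<noteq> []\<close> by (simp add: abs_SSP_def)
  then have "\<forall>B\<in>set (butlast R). Min (abs ` B) \<le> Min (abs ` last R)"
    by (simp add: sorted_append)
  with \<open>{x} \<in> set (butlast R)\<close> have "Min (abs ` {x}) \<le> Min (abs ` last R)" by blast
  then have "m \<le> Min (abs ` last R)" using x(2) by simp
  moreover have "Min (abs ` last R) \<in> abs ` last R"
    using abs_SSP_finite_block[OF R _ L] abs_SSP_nonempty[OF R L] fin by simp
  moreover have "\<bar>y\<bar> < m" if "y \<in> last R" for y
  proof (rule abs_SSP_abs_less_max[OF R less x(1) singletonI x(2) L that])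
    show "y \<noteq> x" using abs_SSP_abs_inj[OF R L x(1) that singletonI] last by auto
  qed
  ultimately show False by fastforce
qed

lemma abs_image_Union_remove_max:
  assumes R: "abs_SSP (insert m T) k R" and less: "\<forall>t\<in>T. t < m"
    and x: "B \<in> set R" "x \<in> B" "\<bar>x\<bar> = m"
  shows "abs ` (\<Union>(set R) - {x}) = T"
proof
  show "abs ` (\<Union>(set R) - {x}) \<subseteq> T"
  proof
    fix t assume "t \<in> abs ` (\<Union>(set R) - {x})"
    then obtain C y where y: "C \<in> set R" "y \<in> C" "y \<noteq> x" and t: "t = \<bar>y\<bar>" by auto
    have "\<bar>y\<bar> < m" by (rule abs_SSP_abs_less_max[OF R less x y])
    then show "t \<in> T" using abs_SSP_abs_mem[OF R y(1,2)] t by auto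
  qed
  show "T \<subseteq> abs ` (\<Union>(set R) - {x})"
  proof
    fix t assume "t \<in> T"
    then have "t \<in> abs ` \<Union>(set R)" using R by (simp add: abs_SSP_def)
    then obtain y where "y \<in> \<Union>(set R)" "t = \<bar>y\<bar>" by auto
    moreover have "y \<noteq> x" using \<open>t \<in> T\<close> \<open>t = \<bar>y\<bar>\<close> less x(3) by auto
    ultimately show "t \<in> abs ` (\<Union>(set R) - {x})" by auto
  qed
qed

lemma abs_SSP_remove_max:
  assumes R: "abs_SSP (insert m T) k R" and fin: "finite T" and less: "\<forall>t\<in>T. t < m"
    and x: "x \<in> \<Union>(set R)" "\<bar>x\<bar> = m" and nonsingleton: "{x} \<notin> set R"
  shows "abs_SSP T k (map (\<lambda>C. C - {x}) R)"
proof -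
  let ?f = "\<lambda>C. C - {x}"
  obtain Bx where Bx: "Bx \<in> set R" "x \<in> Bx" using x(1) by blast
  have ne: "C - {x} \<noteq> {}" if "C \<in> set R" for C
  proof -
    have "C \<noteq> {}" "C \<noteq> {x}" using abs_SSP_nonempty[OF R that] that nonsingleton by auto
    then show ?thesis by blast
  qed
  have "inj_on ?f (set R)"
  proof (rule inj_onI)
    fix B C assume BC: "B \<in> set R" "C \<in> set R" "B - {x} = C - {x}"
    then obtain y where "y \<in> B" "y \<in> C" using ne by blast
    then show "B = C" using abs_SSP_abs_inj[OF R BC(1,2)] by blast
  qed
  then have "distinct (map ?f R)" using R by (simp add: abs_SSP_def distinct_map)
  moreover have "{} \<notin> set (map ?f R)" using ne by auto
  moreover have "\<forall>B'\<in>set (map ?f R). \<forall>C'\<in>set (map ?f R). \<forall>a\<in>B'. \<forall>b\<in>C'. \<bar>a\<bar> = \<bar>b\<bar> \<longrightarrow> B' = C' \<and> a = b"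
  proof (intro ballI impI)
    fix B' C' a b assume "B' \<in> set (map ?f R)" "C' \<in> set (map ?f R)" "a \<in> B'" "b \<in> C'" "\<bar>a\<bar> = \<bar>b\<bar>"
    then obtain B C where "B \<in> set R" "C \<in> set R" "B' = B - {x}" "C' = C - {x}" "a \<in> B" "b \<in> C"
      by auto
    then show "B' = C' \<and> a = b" using abs_SSP_abs_inj[OF R] \<open>\<bar>a\<bar> = \<bar>b\<bar>\<close> by blast
  qed
  moreover have "\<Union>(set (map ?f R)) = \<Union>(set R) - {x}" by auto
  then have "abs ` \<Union>(set (map ?f R)) = T"
    using abs_image_Union_remove_max[OF R less Bx x(2)] by simp
  moreover have "map (\<lambda>B. Min (abs ` B)) (map ?f R) = map (\<lambda>B. Min (abs ` B)) R"
  proof -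
    have "Min (abs ` (C - {x})) = Min (abs ` C)" if "C \<in> set R" for C
    proof (rule Min_abs_Diff_greater)
      show "finite C" using abs_SSP_finite_block[OF R _ that] fin by simp
      show "C - {x} \<noteq> {}" by (rule ne[OF that])
      show "\<forall>y\<in>C - {x}. \<bar>y\<bar> < \<bar>x\<bar>"
        using abs_SSP_abs_less_max[OF R less Bx x(2) that] x(2) by auto
    qed
    then show ?thesis by simp
  qed
  then have "sorted (map (\<lambda>B. Min (abs ` B)) (map ?f R))"
    using R by (simp only: abs_SSP_def)
  ultimately show ?thesis using R unfolding abs_SSP_def by simp
qed

lemma map_Diff_insert_into_block:
  assumes "x \<notin> \<Union>(set \<pi>)"
  shows "map (\<lambda>C. C - {x}) (\<pi>[i := insert x (\<pi> ! i)]) = \<pi>"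
proof -
  have id: "map (\<lambda>C. C - {x}) \<pi> = \<pi>" using assms by (intro map_idI) auto
  show ?thesis
  proof (cases "i < length \<pi>")
    case True
    then have "insert x (\<pi> ! i) - {x} = \<pi> ! i" using assms nth_mem[OF True] by auto
    then show ?thesis using id by (simp add: map_update)
  qed (simp add: id list_update_beyond)
qed

lemma Union_set_conv_UN_nth: "\<Union>(set \<pi>) = (\<Union>i<length \<pi>. \<pi> ! i)"
  by (auto simp: set_conv_nth)

lemma Union_set_update_insert:
  assumes "i < length \<pi>"
  shows "\<Union>(set (\<pi>[i := insert x (\<pi> ! i)])) = insert x (\<Union>(set \<pi>))"
proof -
  have "\<pi>[i := insert x (\<pi> ! i)] ! j = (if j = i then insert x (\<pi> ! j) else \<pi> ! j)"
    if "j < length \<pi>" for j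
    using that assms by simp
  then have "(\<Union>j<length \<pi>. \<pi>[i := insert x (\<pi> ! i)] ! j) = (\<Union>j<length \<pi>. \<pi> ! j \<union> (if j = i then {x} else {}))"
    by (intro SUP_cong) auto
  also have "\<dots> = insert x (\<Union>j<length \<pi>. \<pi> ! j)"
    using assms by (auto split: if_splits)
  finally show ?thesis by (simp add: Union_set_conv_UN_nth)
qed

lemma pos_le_block_sizes:
  assumes "\<forall>B\<in>set \<pi>. finite B"
  shows "pos \<pi> \<le> (\<Sum>i<length \<pi>. (i + 1) * card (\<pi> ! i))"
proof -
  have "pos \<pi> \<le> card (\<Union>(set \<pi>))"
    unfolding pos_def using assms by (intro card_mono) auto
  also have "\<dots> \<le> (\<Sum>i<length \<pi>. card (\<pi> ! i))"
    unfolding Union_set_conv_UN_nth by (rule card_UN_le) simp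
  also have "\<dots> \<le> (\<Sum>i<length \<pi>. (i + 1) * card (\<pi> ! i))"
    by (rule sum_mono) simp
  finally show ?thesis .
qed

lemma pos_insert_into_block:
  assumes i: "i < length \<pi>" and fin: "\<forall>B\<in>set \<pi>. finite B" and x: "x \<notin> \<Union>(set \<pi>)"
  shows "pos (\<pi>[i := insert x (\<pi> ! i)]) = pos \<pi> + (if 0 < x then 1 else 0)"
proof -
  let ?P = "{y \<in> \<Union>(set \<pi>). 0 < y}"
  have fin_P: "finite ?P" and x_P: "x \<notin> ?P" using fin x by auto
  have "card {y \<in> insert x (\<Union>(set \<pi>)). 0 < y} = card ?P + (if 0 < x then 1 else 0)"
  proof (cases "0 < x")
    case True
    then have eq: "{y \<in> insert x (\<Union>(set \<pi>)). 0 < y} = insert x ?P" by auto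
    show ?thesis unfolding eq using card_insert_disjoint[OF fin_P x_P] True by simp
  next
    case False
    then have eq: "{y \<in> insert x (\<Union>(set \<pi>)). 0 < y} = ?P" by auto
    show ?thesis unfolding eq using False by simp
  qed
  then show ?thesis unfolding pos_def Union_set_update_insert[OF i] .
qed

text \<open>List index \<open>i\<close> holds the block \<open>S\<^bsub>i+1\<^esub>\<close>, so a new entry \<open>x\<close> there adds \<open>2(i + 1)\<close> to
  \<open>2 \<Sum> i #S\<^sub>i\<close> and, if positive, \<open>1\<close> to \<open>pos\<close>.\<close>
lemma mstat_insert_into_block:
  assumes i: "i < length \<pi>" and fin: "\<forall>B\<in>set \<pi>. finite B" and x: "x \<notin> \<Union>(set \<pi>)"
  shows "mstat (\<pi>[i := insert x (\<pi> ! i)]) = mstat \<pi> + (if 0 < x then 2 * i + 1 else 2 * i + 2)"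
proof -
  let ?\<rho> = "\<pi>[i := insert x (\<pi> ! i)]"
  let ?w = "\<lambda>\<pi>. \<Sum>j<length \<pi>. (j + 1) * card (\<pi> ! j)"
  have "x \<notin> \<pi> ! i" "finite (\<pi> ! i)" using x fin nth_mem[OF i] by auto
  then have "card (?\<rho> ! j) = card (\<pi> ! j) + (if j = i then 1 else 0)" if "j < length \<pi>" for j
    using that i by simp
  then have "?w ?\<rho> = (\<Sum>j<length \<pi>. (j + 1) * card (\<pi> ! j) + (if j = i then i + 1 else 0))"
    by (intro sum.cong) (simp_all add: algebra_simps)
  also have "\<dots> = ?w \<pi> + (i + 1)"
    using i by (simp add: sum.distrib)
  finally show ?thesis
    using pos_insert_into_block[OF i fin x] pos_le_block_sizes[OF fin]
    by (cases "0 < x") (simp_all add: mstat_def)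
qed

lemma mstat_append_singleton:
  assumes fin: "\<forall>B\<in>set \<pi>. finite B" and x: "x \<notin> \<Union>(set \<pi>)"
  shows "mstat (\<pi> @ [{x}]) = mstat \<pi> + (if 0 < x then 2 * length \<pi> + 1 else 2 * length \<pi> + 2)"
proof -
  let ?n = "length \<pi>"
  have "mstat (\<pi> @ [{}]) = mstat \<pi>"
    by (simp add: mstat_def pos_def nth_append)
  moreover have "\<pi> @ [{x}] = (\<pi> @ [{}])[?n := insert x ((\<pi> @ [{}]) ! ?n)]"
    by simp
  moreover have "mstat ((\<pi> @ [{}])[?n := insert x ((\<pi> @ [{}]) ! ?n)])
      = mstat (\<pi> @ [{}]) + (if 0 < x then 2 * ?n + 1 else 2 * ?n + 2)"
    by (rule mstat_insert_into_block) (use fin x in auto)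
  ultimately show ?thesis by simp
qed

section \<open>Weighted counts of signed partitions\<close>

text \<open>For a set \<open>T\<close> of positive integers this is the sum of \<open>q ^ mstat \<pi>\<close> over \<open>\<pi> \<in> Bset T k\<close>.\<close>
definition SSP_weight :: "'a::comm_ring_1 \<Rightarrow> int set \<Rightarrow> nat \<Rightarrow> 'a" where
  "SSP_weight q T k = (\<Sum>\<pi> | abs_SSP T k \<pi>. q ^ mstat \<pi>)"

lemma finite_abs_SSP:
  assumes "finite T"
  shows "finite {\<pi>. abs_SSP T k \<pi>}"
proof (rule finite_subset)
  show "{\<pi>. abs_SSP T k \<pi>} \<subseteq> {\<pi>. set \<pi> \<subseteq> Pow (T \<union> uminus ` T) \<and> length \<pi> = k}"
    using abs_SSP_block_subset abs_SSP_length by blast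
  show "finite {\<pi>. set \<pi> \<subseteq> Pow (T \<union> uminus ` T) \<and> length \<pi> = k}"
    using assms by (intro finite_lists_length_eq) simp
qed

lemma SSP_weight_empty: "SSP_weight q {} k = (if k = 0 then 1 else 0)"
proof -
  have "abs_SSP {} k \<pi> \<longleftrightarrow> k = 0 \<and> \<pi> = []" for \<pi>
    by (cases \<pi>) (auto simp: abs_SSP_def)
  then show ?thesis by (simp add: SSP_weight_def mstat_def pos_def)
qed

lemma SSP_weight_0_right:
  assumes "T \<noteq> {}"
  shows "SSP_weight q T 0 = 0"
proof -
  have "\<not> abs_SSP T 0 \<pi>" for \<pi> using assms by (auto simp: abs_SSP_def)
  then show ?thesis by (simp add: SSP_weight_def)
qed

lemma sum_weights_append_singleton:
  fixes q :: "'a::comm_ring_1"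
  assumes fin: "finite T" and less: "\<forall>t\<in>T. t < m" and m: "0 < m"
  shows "(\<Sum>R\<in>(\<lambda>(\<pi>, x). \<pi> @ [{x}]) ` ({\<pi>. abs_SSP T k \<pi>} \<times> {m, -m}). q ^ mstat R)
       = q ^ (2 * k + 1) * (1 + q) * SSP_weight q T k"
proof -
  have inj: "inj_on (\<lambda>(\<pi>, x). \<pi> @ [{x}]) ({\<pi>. abs_SSP T k \<pi>} \<times> {m, -m})"
    by (rule inj_onI) auto
  have inner: "(\<Sum>x\<in>{m, -m}. q ^ mstat (\<pi> @ [{x}])) = q ^ (2 * k + 1) * (1 + q) * q ^ mstat \<pi>"
    if \<pi>: "abs_SSP T k \<pi>" for \<pi>
  proof -
    have blocks: "\<forall>B\<in>set \<pi>. finite B" using abs_SSP_finite_block[OF \<pi> fin] by blast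
    have notin: "m \<notin> \<Union>(set \<pi>)" "- m \<notin> \<Union>(set \<pi>)"
      using abs_SSP_abs_mem[OF \<pi>] less m by fastforce+
    have "mstat (\<pi> @ [{m}]) = mstat \<pi> + (2 * k + 1)"
      using mstat_append_singleton[OF blocks notin(1)] abs_SSP_length[OF \<pi>] m by simp
    moreover have "mstat (\<pi> @ [{- m}]) = mstat \<pi> + (2 * k + 2)"
      using mstat_append_singleton[OF blocks notin(2)] abs_SSP_length[OF \<pi>] m by simp
    ultimately show ?thesis using m by (simp add: power_add algebra_simps)
  qed
  have "(\<Sum>R\<in>(\<lambda>(\<pi>, x). \<pi> @ [{x}]) ` ({\<pi>. abs_SSP T k \<pi>} \<times> {m, -m}). q ^ mstat R)
      = (\<Sum>(\<pi>, x)\<in>{\<pi>. abs_SSP T k \<pi>} \<times> {m, -m}. q ^ mstat (\<pi> @ [{x}]))"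
    by (subst sum.reindex[OF inj]) (simp add: case_prod_unfold)
  also have "\<dots> = (\<Sum>\<pi> | abs_SSP T k \<pi>. \<Sum>x\<in>{m, -m}. q ^ mstat (\<pi> @ [{x}]))"
    by (rule sum.cartesian_product[symmetric])
  also have "\<dots> = (\<Sum>\<pi> | abs_SSP T k \<pi>. q ^ (2 * k + 1) * (1 + q) * q ^ mstat \<pi>)"
    by (rule sum.cong) (simp_all add: inner)
  finally show ?thesis by (simp add: SSP_weight_def sum_distrib_left)
qed

lemma inj_on_insert_into_block:
  assumes fin: "finite T" and less: "\<forall>t\<in>T. t < m" and m: "0 < m"
  shows "inj_on (\<lambda>(\<pi>, i, x). \<pi>[i := insert x (\<pi> ! i)]) ({\<pi>. abs_SSP T k \<pi>} \<times> {..<k} \<times> {m, -m})"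
proof (rule inj_onI)
  fix p1 p2
  assume p1: "p1 \<in> {\<pi>. abs_SSP T k \<pi>} \<times> {..<k} \<times> {m, -m}"
    and p2: "p2 \<in> {\<pi>. abs_SSP T k \<pi>} \<times> {..<k} \<times> {m, -m}"
    and eq0: "(\<lambda>(\<pi>, i, x). \<pi>[i := insert x (\<pi> ! i)]) p1 = (\<lambda>(\<pi>, i, x). \<pi>[i := insert x (\<pi> ! i)]) p2"
  obtain \<pi>1 i1 x1 \<pi>2 i2 x2 where p: "p1 = (\<pi>1, i1, x1)" "p2 = (\<pi>2, i2, x2)"
    by (cases p1, cases p2) blast
  have 1: "abs_SSP T k \<pi>1" "i1 < k" "x1 \<in> {m, -m}" and 2: "abs_SSP T k \<pi>2" "i2 < k" "x2 \<in> {m, -m}"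
    using p1 p2 unfolding p by auto
  have eq: "\<pi>1[i1 := insert x1 (\<pi>1 ! i1)] = \<pi>2[i2 := insert x2 (\<pi>2 ! i2)]"
    using eq0 unfolding p by simp
  let ?R = "\<pi>1[i1 := insert x1 (\<pi>1 ! i1)]"
  have abs: "\<bar>x1\<bar> = m" "\<bar>x2\<bar> = m" using 1(3) 2(3) m by auto
  have R: "abs_SSP (insert m T) k ?R"
    using abs_SSP_insert_into_block[OF 1(1) fin _ 1(2), of x1] less abs(1) by simp
  have "x1 \<in> ?R ! i1" using 1(2) abs_SSP_length[OF 1(1)] by simp
  moreover have "x2 \<in> ?R ! i2" unfolding eq using 2(2) abs_SSP_length[OF 2(1)] by simp
  ultimately have same: "i1 = i2 \<and> x1 = x2"
    using abs_SSP_same_block[OF R 1(2) 2(2)] abs by simp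
  have "x1 \<notin> \<Union>(set \<pi>1)" "x1 \<notin> \<Union>(set \<pi>2)"
    using abs_SSP_abs_mem[OF 1(1)] abs_SSP_abs_mem[OF 2(1)] less abs(1) by fastforce+
  from same have i: "i2 = i1" and x: "x2 = x1" by simp_all
  have eq': "?R = \<pi>2[i1 := insert x1 (\<pi>2 ! i1)]"
    using eq unfolding i x .
  have "\<pi>1 = map (\<lambda>C. C - {x1}) ?R"
    by (rule map_Diff_insert_into_block[OF \<open>x1 \<notin> \<Union>(set \<pi>1)\<close>, symmetric])
  also have "\<dots> = map (\<lambda>C. C - {x1}) (\<pi>2[i1 := insert x1 (\<pi>2 ! i1)])"
    by (simp only: eq')
  also have "\<dots> = \<pi>2"
    by (rule map_Diff_insert_into_block[OF \<open>x1 \<notin> \<Union>(set \<pi>2)\<close>])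
  finally show "p1 = p2" using same unfolding p by simp
qed

lemma sum_weights_insert_into_block:
  fixes q :: "'a::comm_ring_1"
  assumes fin: "finite T" and less: "\<forall>t\<in>T. t < m" and m: "0 < m"
  shows "(\<Sum>R\<in>(\<lambda>(\<pi>, i, x). \<pi>[i := insert x (\<pi> ! i)]) ` ({\<pi>. abs_SSP T k \<pi>} \<times> {..<k} \<times> {m, -m}).
          q ^ mstat R)
       = q * (1 + q) * qint (q\<^sup>2) k * SSP_weight q T k"
proof -
  have inner: "(\<Sum>i<k. \<Sum>x\<in>{m, -m}. q ^ mstat (\<pi>[i := insert x (\<pi> ! i)]))
      = q * (1 + q) * qint (q\<^sup>2) k * q ^ mstat \<pi>"
    if \<pi>: "abs_SSP T k \<pi>" for \<pi>
  proof -
    have blocks: "\<forall>B\<in>set \<pi>. finite B" using abs_SSP_finite_block[OF \<pi> fin] by blast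
    have notin: "m \<notin> \<Union>(set \<pi>)" "- m \<notin> \<Union>(set \<pi>)"
      using abs_SSP_abs_mem[OF \<pi>] less m by fastforce+
    have len: "length \<pi> = k" using \<pi> by (rule abs_SSP_length)
    have "(\<Sum>x\<in>{m, -m}. q ^ mstat (\<pi>[i := insert x (\<pi> ! i)]))
        = q ^ mstat \<pi> * (q ^ (2 * i + 1) + q ^ (2 * i + 2))" if i: "i < k" for i
    proof -
      have "mstat (\<pi>[i := insert m (\<pi> ! i)]) = mstat \<pi> + (2 * i + 1)"
        using mstat_insert_into_block[OF _ blocks notin(1)] i len m by simp
      moreover have "mstat (\<pi>[i := insert (- m) (\<pi> ! i)]) = mstat \<pi> + (2 * i + 2)"
        using mstat_insert_into_block[OF _ blocks notin(2)] i len m by simp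
      ultimately show ?thesis using m by (simp add: power_add algebra_simps)
    qed
    then have "(\<Sum>i<k. \<Sum>x\<in>{m, -m}. q ^ mstat (\<pi>[i := insert x (\<pi> ! i)]))
        = q ^ mstat \<pi> * (\<Sum>i<k. q ^ (2 * i + 1) + q ^ (2 * i + 2))"
      by (simp add: sum_distrib_left)
    also have "\<dots> = q ^ mstat \<pi> * (q * (1 + q) * qint (q\<^sup>2) k)"
      by (simp only: sum_odd_even_powers)
    finally show ?thesis by (simp only: ac_simps)
  qed
  have "(\<Sum>R\<in>(\<lambda>(\<pi>, i, x). \<pi>[i := insert x (\<pi> ! i)]) ` ({\<pi>. abs_SSP T k \<pi>} \<times> {..<k} \<times> {m, -m}).
          q ^ mstat R)
      = (\<Sum>(\<pi>, i, x)\<in>{\<pi>. abs_SSP T k \<pi>} \<times> {..<k} \<times> {m, -m}. q ^ mstat (\<pi>[i := insert x (\<pi> ! i)]))"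
    by (subst sum.reindex[OF inj_on_insert_into_block[OF fin less m]]) (simp add: case_prod_unfold)
  also have "\<dots> = (\<Sum>\<pi> | abs_SSP T k \<pi>. \<Sum>i<k. \<Sum>x\<in>{m, -m}. q ^ mstat (\<pi>[i := insert x (\<pi> ! i)]))"
    by (simp add: sum.cartesian_product)
  also have "\<dots> = (\<Sum>\<pi> | abs_SSP T k \<pi>. q * (1 + q) * qint (q\<^sup>2) k * q ^ mstat \<pi>)"
    by (rule sum.cong) (simp_all add: inner)
  finally show ?thesis by (simp add: SSP_weight_def sum_distrib_left)
qed

lemma insert_into_block_map_Diff:
  assumes i: "i < length R" "x \<in> R ! i" and unique: "\<And>j. j < length R \<Longrightarrow> x \<in> R ! j \<Longrightarrow> j = i"
  shows "(map (\<lambda>C. C - {x}) R)[i := insert x (map (\<lambda>C. C - {x}) R ! i)] = R"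
proof (rule nth_equalityI)
  fix j assume j: "j < length ((map (\<lambda>C. C - {x}) R)[i := insert x (map (\<lambda>C. C - {x}) R ! i)])"
  show "(map (\<lambda>C. C - {x}) R)[i := insert x (map (\<lambda>C. C - {x}) R ! i)] ! j = R ! j"
  proof (cases "j = i")
    case True
    then show ?thesis using i by (simp add: insert_absorb)
  next
    case False
    then show ?thesis using j unique by auto
  qed
qed simp

lemma abs_SSP_insert_max_cases:
  assumes R: "abs_SSP (insert m T) (Suc k) R" and fin: "finite T" and less: "\<forall>t\<in>T. t < m"
    and m: "0 < m"
  obtains \<pi> x where "abs_SSP T k \<pi>" "x \<in> {m, -m}" "R = \<pi> @ [{x}]"
  | \<pi> i x where "abs_SSP T (Suc k) \<pi>" "i < Suc k" "x \<in> {m, -m}" "R = \<pi>[i := insert x (\<pi> ! i)]"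
proof -
  have "m \<in> abs ` \<Union>(set R)" using R by (simp add: abs_SSP_def)
  then obtain x where x: "x \<in> \<Union>(set R)" "\<bar>x\<bar> = m" by auto
  have "x = m \<or> x = - m" using x(2) by arith
  then have xm: "x \<in> {m, -m}" by simp
  show ?thesis
  proof (cases "{x} \<in> set R")
    case True
    have "last R = {x}" by (rule abs_SSP_singleton_max_last[OF R fin less True x(2)])
    then have R_eq: "R = butlast R @ [{x}]" using True by (metis append_butlast_last_id empty_iff list.set(1))
    then have "abs_SSP (insert \<bar>x\<bar> T) (Suc k) (butlast R @ [{x}])" using R x(2) by simp
    then have "abs_SSP T k (butlast R)" by (rule abs_SSP_append_singletonD) (use less x(2) in auto)
    then show ?thesis using xm R_eq by (rule that(1))
  next
    case False
    have len: "length R = Suc k" using R by (rule abs_SSP_length)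
    obtain i where i: "i < Suc k" "x \<in> R ! i" using x(1) len by (auto simp: in_set_conv_nth)
    have unique: "j = i" if "j < length R" "x \<in> R ! j" for j
      using abs_SSP_same_block[OF R _ i(1) that(2) i(2)] that(1) len by simp
    have "R = (map (\<lambda>C. C - {x}) R)[i := insert x (map (\<lambda>C. C - {x}) R ! i)]"
      using insert_into_block_map_Diff[OF _ i(2) unique] i(1) len by simp
    then show ?thesis by (rule that(2)[OF abs_SSP_remove_max[OF R fin less x False] i(1) xm])
  qed
qed

lemma abs_SSP_insert_max_eq:
  assumes fin: "finite T" and less: "\<forall>t\<in>T. t < m" and m: "0 < m"
  shows "{R. abs_SSP (insert m T) (Suc k) R}
    = (\<lambda>(\<pi>, x). \<pi> @ [{x}]) ` ({\<pi>. abs_SSP T k \<pi>} \<times> {m, -m})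
      \<union> (\<lambda>(\<pi>, i, x). \<pi>[i := insert x (\<pi> ! i)]) ` ({\<pi>. abs_SSP T (Suc k) \<pi>} \<times> {..<Suc k} \<times> {m, -m})"
    (is "?L = ?A \<union> ?B")
proof
  show "?L \<subseteq> ?A \<union> ?B"
  proof
    fix R assume "R \<in> ?L"
    then have R: "abs_SSP (insert m T) (Suc k) R" by simp
    show "R \<in> ?A \<union> ?B"
    proof (rule abs_SSP_insert_max_cases[OF R fin less m])
      fix \<pi> x assume "abs_SSP T k \<pi>" "x \<in> {m, -m}" "R = \<pi> @ [{x}]"
      then show ?thesis by (intro UnI1 image_eqI[of _ _ "(\<pi>, x)"]) auto
    next
      fix \<pi> i x assume "abs_SSP T (Suc k) \<pi>" "i < Suc k" "x \<in> {m, -m}" "R = \<pi>[i := insert x (\<pi> ! i)]"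
      then show ?thesis by (intro UnI2 image_eqI[of _ _ "(\<pi>, i, x)"]) auto
    qed
  qed
next
  have less_abs: "\<forall>t\<in>T. t < \<bar>x\<bar>" and abs: "\<bar>x\<bar> = m" if "x \<in> {m, -m}" for x
    using that less m by auto
  have "?A \<subseteq> ?L"
  proof (rule image_subsetI, clarify)
    fix \<pi> x assume \<pi>: "abs_SSP T k \<pi>" and x: "x \<in> {m, -m}"
    show "abs_SSP (insert m T) (Suc k) (\<pi> @ [{x}])"
      using abs_SSP_append_singleton[OF \<pi> fin less_abs[OF x]] abs[OF x] by simp
  qed
  moreover have "?B \<subseteq> ?L"
  proof (rule image_subsetI, clarify)
    fix \<pi> i x assume \<pi>: "abs_SSP T (Suc k) \<pi>" and i: "i < Suc k" and x: "x \<in> {m, -m}"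
    show "abs_SSP (insert m T) (Suc k) (\<pi>[i := insert x (\<pi> ! i)])"
      using abs_SSP_insert_into_block[OF \<pi> fin less_abs[OF x] i] abs[OF x] by simp
  qed
  ultimately show "?A \<union> ?B \<subseteq> ?L" by blast
qed

lemma append_singleton_neq_insert_into_block:
  assumes \<pi>: "abs_SSP T k \<pi>" and \<rho>: "abs_SSP T (Suc k) \<rho>" and x: "\<bar>x\<bar> \<notin> T"
  shows "\<pi> @ [{x}] \<noteq> \<rho>[i := insert y (\<rho> ! i)]"
proof
  assume eq: "\<pi> @ [{x}] = \<rho>[i := insert y (\<rho> ! i)]"
  have len: "length \<pi> = k" "length \<rho> = Suc k"
    using abs_SSP_length[OF \<pi>] abs_SSP_length[OF \<rho>] by simp_all
  have "\<rho> ! k \<subseteq> \<rho>[i := insert y (\<rho> ! i)] ! k" using len by (cases "i = k") auto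
  also have "\<dots> = {x}" using len by (simp add: nth_append flip: eq)
  finally have "\<rho> ! k \<subseteq> {x}" .
  moreover have "\<rho> ! k \<in> set \<rho>" using len by simp
  moreover from this have "\<rho> ! k \<noteq> {}" by (rule abs_SSP_nonempty[OF \<rho>])
  ultimately have "\<bar>x\<bar> \<in> T" using abs_SSP_abs_mem[OF \<rho>] by blast
  with x show False ..
qed

lemma SSP_weight_insert_max:
  fixes q :: "'a::comm_ring_1"
  assumes fin: "finite T" and less: "\<forall>t\<in>T. t < m" and m: "0 < m"
  shows "SSP_weight q (insert m T) (Suc k)
       = q ^ (2 * k + 1) * (1 + q) * SSP_weight q T k
         + q * (1 + q) * qint (q\<^sup>2) (Suc k) * SSP_weight q T (Suc k)"
proof -
  let ?A = "(\<lambda>(\<pi>, x). \<pi> @ [{x}]) ` ({\<pi>. abs_SSP T k \<pi>} \<times> {m, -m})"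
  let ?B = "(\<lambda>(\<pi>, i, x). \<pi>[i := insert x (\<pi> ! i)]) ` ({\<pi>. abs_SSP T (Suc k) \<pi>} \<times> {..<Suc k} \<times> {m, -m})"
  have "?A \<inter> ?B = {}"
  proof (rule equals0I)
    fix R assume "R \<in> ?A \<inter> ?B"
    then have "R \<in> ?A" "R \<in> ?B" by auto
    from \<open>R \<in> ?A\<close> obtain \<pi> x where \<pi>: "abs_SSP T k \<pi>" "x \<in> {m, -m}" "R = \<pi> @ [{x}]"
      by auto
    from \<open>R \<in> ?B\<close> obtain \<rho> i y where \<rho>: "abs_SSP T (Suc k) \<rho>" "R = \<rho>[i := insert y (\<rho> ! i)]"
      by auto
    have "\<bar>x\<bar> \<notin> T" using \<pi>(2) less m by auto
    then show False
      using append_singleton_neq_insert_into_block[OF \<pi>(1) \<rho>(1), of x i y] \<pi>(3) \<rho>(2) by simp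
  qed
  moreover have "finite ?A" "finite ?B"
    by (intro finite_imageI finite_cartesian_product finite_abs_SSP[OF fin]; simp)+
  ultimately have "SSP_weight q (insert m T) (Suc k) = (\<Sum>R\<in>?A. q ^ mstat R) + (\<Sum>R\<in>?B. q ^ mstat R)"
    unfolding SSP_weight_def abs_SSP_insert_max_eq[OF fin less m] by (simp add: sum.union_disjoint)
  then show ?thesis
    by (simp only: sum_weights_append_singleton[OF fin less m] sum_weights_insert_into_block[OF fin less m])
qed

theorem SSP_weight_eq:
  fixes q :: "'a::comm_ring_1"
  assumes "finite T" "T \<subseteq> {0<..}"
  shows "SSP_weight q T k = q ^ k\<^sup>2 * (1 + q) ^ k * scaled_qStirling q (card T) k"
  using assms
proof (induction T arbitrary: k rule: finite_linorder_max_induct)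
  case empty
  then show ?case by (simp add: SSP_weight_empty scaled_qStirling_0_left)
next
  case (insert m T)
  have m: "0 < m" and T: "T \<subseteq> {0<..}" using insert.prems by auto
  have card: "card (insert m T) = Suc (card T)" using insert.hyps by auto
  show ?case
  proof (cases k)
    case 0
    then show ?thesis by (simp add: SSP_weight_0_right card scaled_qStirling_Suc_0)
  next
    case (Suc k')
    have pw: "q ^ (Suc k')\<^sup>2 = q ^ k'\<^sup>2 * q ^ (2 * k' + 1)"
    proof -
      have "(Suc k')\<^sup>2 = k'\<^sup>2 + (2 * k' + 1)" by (simp add: power2_eq_square)
      then show ?thesis by (simp only: power_add)
    qed
    have "SSP_weight q (insert m T) k
        = q ^ (2 * k' + 1) * (1 + q) * SSP_weight q T k'
          + q * (1 + q) * qint (q\<^sup>2) (Suc k') * SSP_weight q T (Suc k')"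
      unfolding Suc by (rule SSP_weight_insert_max[OF insert.hyps(1,2) m])
    also have "\<dots> = q ^ k\<^sup>2 * (1 + q) ^ k * scaled_qStirling q (card (insert m T)) k"
      unfolding insert.IH[OF T] card Suc scaled_qStirling_Suc_Suc pw
      by (simp add: qint_2 algebra_simps)
    finally show ?thesis .
  qed
qed

section \<open>Summing over the subsets of [n]\<close>

lemma sum_Pow_card:
  fixes f :: "nat \<Rightarrow> 'a::comm_semiring_1"
  assumes "finite A"
  shows "(\<Sum>T\<in>Pow A. f (card T)) = (\<Sum>j\<le>card A. of_nat (card A choose j) * f j)"
proof -
  have "(\<Sum>T\<in>Pow A. f (card T)) = (\<Sum>j\<le>card A. \<Sum>T | T \<in> Pow A \<and> card T = j. f (card T))"
    by (rule sum.group[symmetric]) (use assms in \<open>auto intro: card_mono\<close>)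
  also have "\<dots> = (\<Sum>j\<le>card A. of_nat (card {T. T \<subseteq> A \<and> card T = j}) * f j)"
    by (intro sum.cong) auto
  also have "\<dots> = (\<Sum>j\<le>card A. of_nat (card A choose j) * f j)"
    by (simp add: n_subsets[OF assms])
  finally show ?thesis .
qed

lemma sum_SSP_weight_Pow:
  fixes q :: "'a::comm_ring_1"
  assumes "finite N" "N \<subseteq> {0<..}"
  shows "(\<Sum>T\<in>Pow N. SSP_weight q T k) = q ^ k\<^sup>2 * (1 + q) ^ k * qStirlingB q (card N) k"
proof -
  have "SSP_weight q T k = q ^ k\<^sup>2 * (1 + q) ^ k * scaled_qStirling q (card T) k" if "T \<in> Pow N" for T
    using that assms by (intro SSP_weight_eq) (auto intro: finite_subset)
  then have "(\<Sum>T\<in>Pow N. SSP_weight q T k)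
      = q ^ k\<^sup>2 * (1 + q) ^ k * (\<Sum>T\<in>Pow N. scaled_qStirling q (card T) k)"
    unfolding sum_distrib_left by (rule sum.cong[OF refl])
  also have "\<dots> = q ^ k\<^sup>2 * (1 + q) ^ k * qStirlingB q (card N) k"
    using sum_Pow_card[OF assms(1), of "\<lambda>j. scaled_qStirling q j k"]
    by (simp add: qStirlingB_eq_binomial_sum)
  finally show ?thesis .
qed

lemma Dsub_eq:
  "Dsub n k = (\<Union>T \<in> Pow {1..int n} - (\<lambda>i. {1..int n} - {i}) ` {1..int n}. {\<pi>. abs_SSP T k \<pi>})"
proof -
  let ?N = "{1..int n}"
  have Bset: "Bset T k = {\<pi>. abs_SSP T k \<pi>}" if "T \<subseteq> ?N" for T
  proof -
    have "T \<subseteq> {0<..}" using that by auto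
    then show ?thesis by (simp add: Bset_def SSP_iff_abs_SSP)
  qed
  have Bsub: "Bsub ?N k = (\<Union>T\<in>Pow ?N. {\<pi>. abs_SSP T k \<pi>})"
    unfolding Bsub_def using Bset by (intro SUP_cong) auto
  have missing_one: "(\<Union>i\<in>?N. Bset (?N - {i}) k) = (\<Union>i\<in>?N. {\<pi>. abs_SSP (?N - {i}) k \<pi>})"
    using Bset by (intro SUP_cong) auto
  show ?thesis
    unfolding Dsub_def Bsub missing_one
  proof (intro equalityI subsetI)
    fix \<pi> assume "\<pi> \<in> (\<Union>T\<in>Pow ?N. {\<pi>. abs_SSP T k \<pi>}) - (\<Union>i\<in>?N. {\<pi>. abs_SSP (?N - {i}) k \<pi>})"
    then obtain T where "T \<in> Pow ?N" "abs_SSP T k \<pi>" "\<forall>i\<in>?N. \<not> abs_SSP (?N - {i}) k \<pi>"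
      by blast
    then show "\<pi> \<in> (\<Union>T \<in> Pow ?N - (\<lambda>i. ?N - {i}) ` ?N. {\<pi>. abs_SSP T k \<pi>})"
      by (intro UN_I[of T]) auto
  next
    fix \<pi> assume "\<pi> \<in> (\<Union>T \<in> Pow ?N - (\<lambda>i. ?N - {i}) ` ?N. {\<pi>. abs_SSP T k \<pi>})"
    then obtain T where T: "T \<in> Pow ?N" "T \<notin> (\<lambda>i. ?N - {i}) ` ?N" "abs_SSP T k \<pi>"
      by blast
    have "\<not> abs_SSP (?N - {i}) k \<pi>" if "i \<in> ?N" for i
      using T(2,3) that by (auto simp: abs_SSP_def)
    with T show "\<pi> \<in> (\<Union>T\<in>Pow ?N. {\<pi>. abs_SSP T k \<pi>}) - (\<Union>i\<in>?N. {\<pi>. abs_SSP (?N - {i}) k \<pi>})"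
      by blast
  qed
qed

lemma sum_Dsub:
  fixes q :: "'a::comm_ring_1"
  shows "(\<Sum>\<pi>\<in>Dsub n k. q ^ mstat \<pi>)
       = q ^ k\<^sup>2 * (1 + q) ^ k * (qStirlingB q n k - of_nat n * scaled_qStirling q (n - 1) k)"
proof -
  define N where "N = {1..int n}"
  define Q where "Q = (\<lambda>i. N - {i}) ` N"
  define c where "c = q ^ k\<^sup>2 * (1 + q) ^ k"
  have N: "finite N" "card N = n" "N \<subseteq> {0<..}" by (auto simp: N_def)
  have weight: "SSP_weight q T k = c * scaled_qStirling q (card T) k" if "T \<subseteq> N" for T
    unfolding c_def by (rule SSP_weight_eq[OF finite_subset[OF that N(1)]]) (use that N(3) in blast)
  have "(\<Sum>\<pi>\<in>Dsub n k. q ^ mstat \<pi>) = (\<Sum>T\<in>Pow N - Q. SSP_weight q T k)"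
    unfolding Dsub_eq N_def[symmetric] Q_def[symmetric] SSP_weight_def
  proof (rule sum.UNION_disjoint)
    show "finite (Pow N - Q)" using N by simp
    show "\<forall>T\<in>Pow N - Q. finite {\<pi>. abs_SSP T k \<pi>}"
      using N(1) by (auto intro: finite_abs_SSP finite_subset)
    show "\<forall>T\<in>Pow N - Q. \<forall>T'\<in>Pow N - Q. T \<noteq> T' \<longrightarrow> {\<pi>. abs_SSP T k \<pi>} \<inter> {\<pi>. abs_SSP T' k \<pi>} = {}"
      by (auto simp: abs_SSP_def)
  qed
  also have "\<dots> = (\<Sum>T\<in>Pow N. SSP_weight q T k) - (\<Sum>T\<in>Q. SSP_weight q T k)"
    by (rule sum_diff) (auto simp: Q_def N(1))
  also have "(\<Sum>T\<in>Pow N. SSP_weight q T k) = c * qStirlingB q n k"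
    using sum_SSP_weight_Pow[OF N(1,3)] N(2) by (simp add: c_def)
  also have "(\<Sum>T\<in>Q. SSP_weight q T k) = of_nat n * (c * scaled_qStirling q (n - 1) k)"
  proof -
    have "inj_on (\<lambda>i. N - {i}) N" by (rule inj_onI) auto
    then have "(\<Sum>T\<in>Q. SSP_weight q T k) = (\<Sum>i\<in>N. SSP_weight q (N - {i}) k)"
      unfolding Q_def by (rule sum.reindex_cong) simp_all
    also have "\<dots> = (\<Sum>i\<in>N. c * scaled_qStirling q (n - 1) k)"
      using weight N by (intro sum.cong) simp_all
    finally show ?thesis using N(2) by simp
  qed
  finally show ?thesis by (simp add: c_def algebra_simps)
qed

theorem proposition3p3:
  fixes q :: "'a::field" and n k :: nat
  assumes "k \<le> n"
  shows "qStirlingB q n k =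
           (\<Sum>j=k..n. of_nat (n choose j) * qint q 2 ^ (j - k) * q ^ (j - k) * qStirling (q\<^sup>2) j k)
     \<and> (q \<noteq> 0 \<and> qint q 2 \<noteq> 0 \<longrightarrow>
         qStirlingB q n k =
           qStirlingD q n k + of_nat n * qint q 2 ^ (n - k - 1) * q ^ (n - k - 1) * qStirling (q\<^sup>2) (n - 1) k)"
proof -
  have part1: "qStirlingB q n k = (\<Sum>j=k..n. of_nat (n choose j) * scaled_qStirling q j k)"
    unfolding qStirlingB_eq_binomial_sum
    by (rule sum.mono_neutral_right) (auto simp: scaled_qStirling_def qStirling_eq_0)
  have part2: "qStirlingD q n k = qStirlingB q n k - of_nat n * scaled_qStirling q (n - 1) k"
    if "q \<noteq> 0" "qint q 2 \<noteq> 0"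
    using that by (simp add: qStirlingD_def sum_Dsub qint_2)
  show ?thesis
    using part1 part2 by (simp add: scaled_qStirling_def power_mult_distrib mult.assoc diff_commute)
qed

end
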